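(* For each arrival $t\ge1$ and each level $i\ge 0$, we have $\mathscr{C}^{(t-1)}_{i+1}\preceq\mathscr{C}^{(t)}_{{\rm inh},i}$.
   Context: An offline instance $(\mathcal{M},D)$ consists of demand pairs $D=\{(u_j,v_j)\}$ over a terminal set $V=\{u_j,v_j\}$, each terminal in exactly one pair (the other element of its pair is its mate), and a metric $\mathcal{M}$ on $V$ with all distances at least $1$, viewed as the complete graph on $V$ with edge costs equal to distances. A clustering of $V$ is a partition of $V$; $\mathcal{M}/\mathscr{C}$ denotes the shortest-path metric on $\mathscr{C}$ of the graph obtained from the complete weighted graph on $V$ by contracting each cluster of $\mathscr{C}$ into a single vertex. For clusterings $\mathscr{C}_1$ of $V_1$ and $\mathscr{C}_2$ of $V_2$, write $\mathscr{C}_1\preceq\mathscr{C}_2$ if every cluster of $\mathscr{C}_1$ is contained in some cluster of $\mathscr{C}_2$. Clustering procedure: ${\sf level}(v)=\lceil\log_2{\sf dist}_{\mathcal{M}}(v,\text{mate of }v)\rceil$, ${\sf level}(C)=\max_{v\in C}{\sf level}(v)$, $L=\max_v{\sf level}(v)$. $\mathscr{C}_0$ is the singleton clustering. For $i=0,\dots,L$: $C\in\mathscr{C}_i$ is $i$-active if ${\sf level}(C)\ge i$; $H_i$ has as vertices the $i$-active clusters of $\mathscr{C}_i$, with an edge between distinct $C_1,C_2$ iff ${\sf dist}_{\mathcal{M}/\mathscr{C}_i}(C_1,C_2)<2^{i+1}$; $\mathscr{C}_{i+1}$ consists of the non-$i$-active clusters of $\mathscr{C}_i$ together with, for each connected component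 of $H_i$, the union of its clusters. Online setting: pairs arrive in order; for $1\le t\le n$ the instance $(\mathcal{M}^{(t)},D^{(t)})$ consists of the first $t$ pairs and the metric restricted to their terminals. Running the procedure yields $L^{(t)},\mathscr{C}^{(t)}_i,H^{(t)}_i$; for $i\ge L^{(t)}+1$, $\mathscr{C}^{(t)}_i:=\mathscr{C}^{(t)}_{L^{(t)}+1}$ and $H^{(t)}_i$ is empty; for $t=0$ all $\mathscr{C}^{(0)}_i,H^{(0)}_i$ are empty. It holds that $\mathscr{C}^{(t-1)}_i\preceq\mathscr{C}^{(t)}_i$. Virtual forests are chosen recursively in $t$: $\hat F^{(0)}_i=\emptyset$. Given the spanning forest $\hat F^{(t-1)}_i$ of $H^{(t-1)}_i$, for each edge $(C_1,C_2)\in\hat F^{(t-1)}_i$ let $D_1,D_2$ be the clusters of $\mathscr{C}^{(t)}_i$ containing $C_1,C_2$; if $D_1\ne D_2$ then $(D_1,D_2)$ is an edge of $H^{(t)}_i$, called inherited. Let $\hat F^{(t)}_{{\rm inh},i}$ be an arbitrary spanning forest of the subgraph of $H^{(t)}_i$ formed by its inherited edges, and let $\hat F^{(t)}_i$ be an arbitrary spanning forest of $H^{(t)}_i$ containing $\hat F^{(t)}_{{\rm inh},i}$. Finally, $\mathscr{C}^{(t)}_{{\rm inh},i}$ is the clustering consisting of the non-$i$-active clusters of $\mathscr{C}^{(t)}_i$ together with, for each connected component of the graph with vertex set $V(H^{(t)}_i)$ and edge set $\hat F^{(t)}_{{\rm inh},i}$, the union of the clusters in that component. *)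

theory Defs
  imports Complex_Main
begin

definition terms :: "('a \<times> 'a) list \<Rightarrow> 'a set" where
  "terms qs = (\<Union>(u,v)\<in>set qs. {u, v})"

definition mate :: "('a \<times> 'a) list \<Rightarrow> 'a \<Rightarrow> 'a" where
  "mate qs v = (THE w. (v, w) \<in> set qs \<or> (w, v) \<in> set qs)"

definition lvl :: "('a \<Rightarrow> 'a \<Rightarrow> real) \<Rightarrow> ('a \<times> 'a) list \<Rightarrow> 'a \<Rightarrow> nat" where
  "lvl d qs v = nat \<lceil>log 2 (d v (mate qs v))\<rceil>"

definition clvl :: "('a \<Rightarrow> 'a \<Rightarrow> real) \<Rightarrow> ('a \<times> 'a) list \<Rightarrow> 'a set \<Rightarrow> nat" where
  "clvl d qs C = Max (lvl d qs ` C)"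

definition maxL :: "('a \<Rightarrow> 'a \<Rightarrow> real) \<Rightarrow> ('a \<times> 'a) list \<Rightarrow> nat" where
  "maxL d qs = Max (lvl d qs ` terms qs)"

text \<open>Weight of the (cheapest parallel) edge between two clusters after contraction.\<close>
definition edgew :: "('a \<Rightarrow> 'a \<Rightarrow> real) \<Rightarrow> 'a set \<Rightarrow> 'a set \<Rightarrow> real" where
  "edgew d X Y = Inf {d x y | x y. x \<in> X \<and> y \<in> Y}"

definition cdist :: "('a \<Rightarrow> 'a \<Rightarrow> real) \<Rightarrow> 'a set set \<Rightarrow> 'a set \<Rightarrow> 'a set \<Rightarrow> real" where
  "cdist d CC A B = Inf {sum_list (map (\<lambda>(X, Y). edgew d X Y) (zip xs (tl xs))) | xs.
       xs \<noteq> [] \<and> hd xs = A \<and> last xs = B \<and> set xs \<subseteq> CC}"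

definition hedge :: "('a \<Rightarrow> 'a \<Rightarrow> real) \<Rightarrow> ('a \<times> 'a) list \<Rightarrow> 'a set set \<Rightarrow> nat
    \<Rightarrow> 'a set \<Rightarrow> 'a set \<Rightarrow> bool" where
  "hedge d qs CC i C1 C2 \<longleftrightarrow> C1 \<in> CC \<and> C2 \<in> CC \<and> i \<le> clvl d qs C1 \<and> i \<le> clvl d qs C2
     \<and> C1 \<noteq> C2 \<and> cdist d CC C1 C2 < 2 ^ (Suc i)"

primrec clus :: "('a \<Rightarrow> 'a \<Rightarrow> real) \<Rightarrow> ('a \<times> 'a) list \<Rightarrow> nat \<Rightarrow> 'a set set" where
  "clus d qs 0 = (\<lambda>v. {v}) ` terms qs"
| "clus d qs (Suc i) =
     (if i \<le> maxL d qs then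
        {C \<in> clus d qs i. clvl d qs C < i}
        \<union> (\<lambda>C. \<Union>{D. (hedge d qs (clus d qs i) i)\<^sup>*\<^sup>* C D}) ` {C \<in> clus d qs i. i \<le> clvl d qs C}
      else clus d qs i)"

definition Hverts :: "('a \<Rightarrow> 'a \<Rightarrow> real) \<Rightarrow> ('a \<times> 'a) list \<Rightarrow> nat \<Rightarrow> 'a set set" where
  "Hverts d qs i = (if i \<le> maxL d qs then {C \<in> clus d qs i. i \<le> clvl d qs C} else {})"

definition Hedges :: "('a \<Rightarrow> 'a \<Rightarrow> real) \<Rightarrow> ('a \<times> 'a) list \<Rightarrow> nat \<Rightarrow> 'a set set set" where
  "Hedges d qs i = (if i \<le> maxL d qs then
      {{C1, C2} | C1 C2. hedge d qs (clus d qs i) i C1 C2} else {})"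

definition refines :: "'a set set \<Rightarrow> 'a set set \<Rightarrow> bool" where
  "refines C1 C2 \<longleftrightarrow> (\<forall>C\<in>C1. \<exists>D\<in>C2. C \<subseteq> D)"

definition econn :: "'v set set \<Rightarrow> 'v \<Rightarrow> 'v \<Rightarrow> bool" where
  "econn E = (\<lambda>x y. {x, y} \<in> E)\<^sup>*\<^sup>*"

definition is_cycle :: "'v set set \<Rightarrow> 'v list \<Rightarrow> bool" where
  "is_cycle F vs \<longleftrightarrow> length vs \<ge> 3 \<and> distinct vs \<and>
     (\<forall>k < length vs. {vs ! k, vs ! ((k + 1) mod length vs)} \<in> F)"

definition forest :: "'v set set \<Rightarrow> bool" where
  "forest F \<longleftrightarrow> \<not> (\<exists>vs. is_cycle F vs)"

definition spanning_forest :: "'v set \<Rightarrow> 'v set set \<Rightarrow> 'v set set \<Rightarrow> bool" where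
  "spanning_forest Vs E F \<longleftrightarrow> F \<subseteq> E \<and> forest F \<and>
     (\<forall>x\<in>Vs. \<forall>y\<in>Vs. econn E x y \<longrightarrow> econn F x y)"

definition inh :: "('a \<Rightarrow> 'a \<Rightarrow> real) \<Rightarrow> ('a \<times> 'a) list \<Rightarrow> nat \<Rightarrow> nat \<Rightarrow> 'a set set set
    \<Rightarrow> 'a set set set" where
  "inh d ps t i Fprev = {{D1, D2} | C1 C2 D1 D2. {C1, C2} \<in> Fprev
      \<and> D1 \<in> clus d (take t ps) i \<and> D2 \<in> clus d (take t ps) i
      \<and> C1 \<subseteq> D1 \<and> C2 \<subseteq> D2 \<and> D1 \<noteq> D2}"

definition cinh :: "('a \<Rightarrow> 'a \<Rightarrow> real) \<Rightarrow> ('a \<times> 'a) list \<Rightarrow> nat \<Rightarrow> nat \<Rightarrow> 'a set set set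
    \<Rightarrow> 'a set set" where
  "cinh d ps t i Finh =
     {C \<in> clus d (take t ps) i. clvl d (take t ps) C < i}
     \<union> (\<lambda>C. \<Union>{D \<in> Hverts d (take t ps) i. econn Finh C D}) ` Hverts d (take t ps) i"

end

theory Submission
  imports Defs
begin

(* Since terminals are distinct, an arrival changes neither mates nor levels of old terminals.
   Sending each old cluster X to a new cluster f X containing it can only shorten contracted
   distances, so every edge of the old H_i either collapses under f or is an edge of the new H_i;
   by induction on i this gives C^(t-1)_i <= C^(t)_i.  A cluster of C^(t-1)_(i+1) is an inactive
   cluster of C^(t-1)_i or the union of a component of H^(t-1)_i.  Such a component is connected
   by the old forest F^(t-1)_i, and each of its edges either collapses under f or is an inherited
   edge, so f maps the whole component into one component of the inherited forest. *)

lemma terms_conv: "terms q = set (concat (map (\<lambda>(u, v). [u, v]) q))"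
  unfolding terms_def by (induction q) auto

lemma finite_terms: "finite (terms q)"
  unfolding terms_def by auto

lemma terms_mono: "set q \<subseteq> set q' \<Longrightarrow> terms q \<subseteq> terms q'"
  unfolding terms_def by blast

lemma mate_append:
  assumes "distinct (concat (map (\<lambda>(u, v). [u, v]) (q @ r)))" and "v \<in> terms q"
  shows "mate (q @ r) v = mate q v"
proof -
  have "v \<notin> terms r" using assms by (auto simp: terms_conv)
  then have "(v, w) \<notin> set r \<and> (w, v) \<notin> set r" for w by (auto simp: terms_def)
  then show ?thesis by (simp add: mate_def)
qed

lemma lvl_take_eq:
  assumes "distinct (concat (map (\<lambda>(u, v). [u, v]) ps))" and "m \<le> n" and "v \<in> terms (take m ps)"
  shows "lvl d (take n ps) v = lvl d (take m ps) v"
proof -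
  have "take n ps = take m ps @ drop m (take n ps)"
    using \<open>m \<le> n\<close> by (metis append_take_drop_id min.absorb1 take_take)
  moreover have "distinct (concat (map (\<lambda>(u, v). [u, v]) (take n ps)))"
    using assms(1) by (metis append_take_drop_id concat_append distinct_append map_append)
  ultimately show ?thesis using mate_append assms(3) unfolding lvl_def by metis
qed

definition walk_len :: "('a \<Rightarrow> 'a \<Rightarrow> real) \<Rightarrow> 'a set list \<Rightarrow> real" where
  "walk_len d xs = sum_list (map (\<lambda>(X, Y). edgew d X Y) (zip xs (tl xs)))"

lemma walk_len_simps [simp]:
  "walk_len d [] = 0"
  "walk_len d [X] = 0"
  "walk_len d (X # Y # xs) = edgew d X Y + walk_len d (Y # xs)"
  by (simp_all add: walk_len_def)

lemma cdist_walk_len: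
  "cdist d CC A B = Inf {walk_len d xs | xs. xs \<noteq> [] \<and> hd xs = A \<and> last xs = B \<and> set xs \<subseteq> CC}"
  by (simp add: cdist_def walk_len_def)

context
  fixes d :: "'a \<Rightarrow> 'a \<Rightarrow> real" and S :: "'a set"
  assumes dist_nonneg: "\<forall>x\<in>S. \<forall>y\<in>S. 0 \<le> d x y"
begin

lemma edgew_nonneg: "X \<noteq> {} \<Longrightarrow> Y \<noteq> {} \<Longrightarrow> X \<subseteq> S \<Longrightarrow> Y \<subseteq> S \<Longrightarrow> 0 \<le> edgew d X Y"
  unfolding edgew_def using dist_nonneg by (intro cInf_greatest) auto

lemma edgew_antimono:
  assumes "X \<noteq> {}" "Y \<noteq> {}" "X \<subseteq> X'" "Y \<subseteq> Y'" "X' \<subseteq> S" "Y' \<subseteq> S"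
  shows "edgew d X' Y' \<le> edgew d X Y"
  unfolding edgew_def
proof (rule cInf_superset_mono)
  show "bdd_below {d x y |x y. x \<in> X' \<and> y \<in> Y'}"
    unfolding bdd_below_def using assms dist_nonneg by blast
qed (use assms in blast)+

lemma walk_len_nonneg:
  assumes "\<forall>Y\<in>CC. Y \<noteq> {} \<and> Y \<subseteq> S"
  shows "set xs \<subseteq> CC \<Longrightarrow> 0 \<le> walk_len d xs"
proof (induction xs rule: induct_list012)
  case (3 X Y xs)
  then have "0 \<le> edgew d X Y" using assms by (intro edgew_nonneg) auto
  with 3 show ?case by simp
qed simp_all

lemma walk_len_map_le:
  assumes f: "\<forall>X\<in>CC. f X \<in> CC' \<and> X \<subseteq> f X" and "\<forall>X\<in>CC. X \<noteq> {}"
    and "\<forall>Y\<in>CC'. Y \<noteq> {} \<and> Y \<subseteq> S"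
  shows "set xs \<subseteq> CC \<Longrightarrow> walk_len d (map f xs) \<le> walk_len d xs"
proof (induction xs rule: induct_list012)
  case (3 X Y xs)
  then have "edgew d (f X) (f Y) \<le> edgew d X Y" using assms by (intro edgew_antimono) auto
  with 3 show ?case by simp
qed simp_all

lemma cdist_map_le:
  assumes f: "\<forall>X\<in>CC. f X \<in> CC' \<and> X \<subseteq> f X" and CC: "\<forall>X\<in>CC. X \<noteq> {}"
    and CC': "\<forall>Y\<in>CC'. Y \<noteq> {} \<and> Y \<subseteq> S" and AB: "A \<in> CC" "B \<in> CC"
  shows "cdist d CC' (f A) (f B) \<le> cdist d CC A B"
  unfolding cdist_walk_len
proof (rule cInf_greatest)
  show "{walk_len d xs |xs. xs \<noteq> [] \<and> hd xs = A \<and> last xs = B \<and> set xs \<subseteq> CC} \<noteq> {}"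
    using AB by (auto intro!: exI[of _ "[A, B]"])
next
  let ?W' = "{walk_len d xs |xs. xs \<noteq> [] \<and> hd xs = f A \<and> last xs = f B \<and> set xs \<subseteq> CC'}"
  fix s assume "s \<in> {walk_len d xs |xs. xs \<noteq> [] \<and> hd xs = A \<and> last xs = B \<and> set xs \<subseteq> CC}"
  then obtain xs where xs: "xs \<noteq> []" "hd xs = A" "last xs = B" "set xs \<subseteq> CC"
    and s: "s = walk_len d xs" by blast
  have "walk_len d (map f xs) \<in> ?W'"
    using xs f by (force simp: hd_map last_map intro!: exI[of _ "map f xs"])
  moreover have "bdd_below ?W'"
    unfolding bdd_below_def using walk_len_nonneg[OF CC'] by blast
  ultimately have "Inf ?W' \<le> walk_len d (map f xs)" by (rule cInf_lower)
  also have "\<dots> \<le> s" unfolding s by (rule walk_len_map_le[OF f CC CC' xs(4)])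
  finally show "Inf ?W' \<le> s" .
qed

end

lemma refines_choice:
  assumes "refines A B"
  obtains f where "\<forall>X\<in>A. f X \<in> B \<and> X \<subseteq> f X"
proof -
  from assms have "\<forall>X\<in>A. \<exists>D. D \<in> B \<and> X \<subseteq> D" unfolding refines_def by blast
  then show ?thesis using that by (metis bchoice)
qed

lemma rtranclp_hedge_target:
  "(hedge d q CC i)\<^sup>*\<^sup>* C D \<Longrightarrow> D = C \<or> D \<in> CC \<and> i \<le> clvl d q D"
  by (induction rule: rtranclp_induct) (auto simp: hedge_def)

lemma clus_SucE:
  assumes "C \<in> clus d q (Suc i)"
  obtains "C \<in> clus d q i"
  | C0 where "C0 \<in> clus d q i" "i \<le> clvl d q C0" "C = \<Union>{D. (hedge d q (clus d q i) i)\<^sup>*\<^sup>* C0 D}"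
proof (cases "i \<le> maxL d q")
  case True
  then have "C \<in> {C \<in> clus d q i. clvl d q C < i}
      \<union> (\<lambda>C. \<Union>{D. (hedge d q (clus d q i) i)\<^sup>*\<^sup>* C D}) ` {C \<in> clus d q i. i \<le> clvl d q C}"
    using assms by (simp only: clus.simps if_True)
  with that show ?thesis by blast
next
  case False
  then have "C \<in> clus d q i" using assms by (simp only: clus.simps if_False)
  with that show ?thesis by blast
qed

lemma clus_nonempty_subset_terms: "C \<in> clus d q i \<Longrightarrow> C \<noteq> {} \<and> C \<subseteq> terms q"
proof (induction i arbitrary: C)
  case (Suc i)
  from Suc.prems show ?case
  proof (cases rule: clus_SucE)
    case (2 C0)
    have "C0 \<subseteq> C" using 2 by blast
    moreover have "C \<subseteq> terms q" using 2 Suc.IH rtranclp_hedge_target by blast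
    ultimately show ?thesis using Suc.IH 2 by blast
  qed (use Suc.IH in blast)
qed auto

lemma clus_Nil: "clus d [] i = {}"
  using clus_nonempty_subset_terms[of _ d "[]" i] by (auto simp: terms_def)

lemma clvl_le_maxL: "C \<in> clus d q i \<Longrightarrow> clvl d q C \<le> maxL d q"
  unfolding clvl_def maxL_def using clus_nonempty_subset_terms[of C d q i] finite_terms[of q]
  by (intro Max_mono) auto

lemma Hverts_iff: "C \<in> Hverts d q i \<longleftrightarrow> C \<in> clus d q i \<and> i \<le> clvl d q C"
  using clvl_le_maxL[of C d q i] by (auto simp: Hverts_def)

lemma Hedges_eq: "Hedges d q i = {{C1, C2} | C1 C2. hedge d q (clus d q i) i C1 C2}"
proof (cases "i \<le> maxL d q")
  case False
  then have "\<not> hedge d q (clus d q i) i C1 C2" for C1 C2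
    using clvl_le_maxL[of C1 d q i] unfolding hedge_def by linarith
  with False show ?thesis by (simp add: Hedges_def)
qed (simp add: Hedges_def)

lemma Hedges_endpoint:
  assumes "{C1, C2} \<in> Hedges d q i"
  shows "C1 \<in> Hverts d q i"
proof -
  have "\<exists>D1 D2. {C1, C2} = {D1, D2} \<and> hedge d q (clus d q i) i D1 D2"
    using assms unfolding Hedges_eq mem_Collect_eq .
  then obtain D1 D2 where e: "{C1, C2} = {D1, D2}" "hedge d q (clus d q i) i D1 D2"
    by (elim exE conjE)
  have "C1 \<in> {D1, D2}" unfolding e(1)[symmetric] by simp
  moreover have "D1 \<in> Hverts d q i" "D2 \<in> Hverts d q i"
    using e(2) unfolding hedge_def Hverts_iff by simp_all
  ultimately show ?thesis by blast
qed

lemma clus_Suc_component: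
  assumes "C0 \<in> Hverts d q i"
  shows "\<Union>{D. (hedge d q (clus d q i) i)\<^sup>*\<^sup>* C0 D} \<in> clus d q (Suc i)"
proof -
  have C0: "C0 \<in> clus d q i" "i \<le> clvl d q C0" using assms by (simp_all add: Hverts_iff)
  then have "i \<le> maxL d q" using clvl_le_maxL[of C0 d q i] by linarith
  then show ?thesis unfolding clus.simps if_P[OF \<open>i \<le> maxL d q\<close>]
    using C0 by (intro UnI2 imageI CollectI conjI)
qed

lemma clus_Suc_inactive: "C \<in> clus d q i \<Longrightarrow> clvl d q C < i \<Longrightarrow> C \<in> clus d q (Suc i)"
  by simp

lemma refines_clus_Suc: "refines (clus d q i) (clus d q (Suc i))"
  unfolding refines_def
proof
  fix C assume C: "C \<in> clus d q i"
  show "\<exists>E\<in>clus d q (Suc i). C \<subseteq> E"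
  proof (cases "i \<le> clvl d q C")
    case True
    then have "\<Union>{D. (hedge d q (clus d q i) i)\<^sup>*\<^sup>* C D} \<in> clus d q (Suc i)"
      using C by (intro clus_Suc_component) (simp add: Hverts_iff)
    moreover have "C \<subseteq> \<Union>{D. (hedge d q (clus d q i) i)\<^sup>*\<^sup>* C D}" by blast
    ultimately show ?thesis by (rule bexI[rotated])
  next
    case False
    then have "C \<in> clus d q (Suc i)" using C by (intro clus_Suc_inactive) simp_all
    then show ?thesis by blast
  qed
qed

lemma rtranclp_hedge_econn:
  "(hedge d q (clus d q i) i)\<^sup>*\<^sup>* C D \<Longrightarrow> econn (Hedges d q i) C D"
  unfolding econn_def
proof (induction rule: rtranclp_induct)
  case (step y z)
  then have "{y, z} \<in> Hedges d q i"
    unfolding Hedges_eq mem_Collect_eq by (intro exI[of _ y] exI[of _ z] conjI refl)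
  with step.IH show ?case by (rule rtranclp.rtrancl_into_rtrancl)
qed simp

lemma spanning_forest_econn:
  "spanning_forest Vs E F \<Longrightarrow> x \<in> Vs \<Longrightarrow> y \<in> Vs \<Longrightarrow> econn E x y \<Longrightarrow> econn F x y"
  unfolding spanning_forest_def by blast

context
  fixes d :: "'a \<Rightarrow> 'a \<Rightarrow> real" and qo qn :: "('a \<times> 'a) list"
  assumes terms_subset: "terms qo \<subseteq> terms qn"
    and lvl_eq: "\<forall>v\<in>terms qo. lvl d qo v = lvl d qn v"
    and dist_nonneg: "\<forall>x\<in>terms qn. \<forall>y\<in>terms qn. 0 \<le> d x y"
begin

context
  fixes i :: nat and f :: "'a set \<Rightarrow> 'a set"
  assumes f_into: "\<forall>X\<in>clus d qo i. f X \<in> clus d qn i \<and> X \<subseteq> f X"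
begin

lemma clvl_le_clvl_image:
  assumes "X \<in> clus d qo i"
  shows "clvl d qo X \<le> clvl d qn (f X)"
proof -
  have X: "X \<noteq> {}" "X \<subseteq> terms qo" using clus_nonempty_subset_terms[OF assms] by simp_all
  have fX: "X \<subseteq> f X" "f X \<subseteq> terms qn"
    using f_into assms clus_nonempty_subset_terms[of "f X" d qn i] by simp_all
  have "clvl d qo X = Max (lvl d qn ` X)"
    unfolding clvl_def using X(2) lvl_eq by (intro arg_cong[where f = Max] image_cong) auto
  also have "\<dots> \<le> Max (lvl d qn ` f X)"
    using X(1) fX finite_subset[OF fX(2) finite_terms] by (intro Max_mono) auto
  finally show ?thesis by (simp only: clvl_def)
qed

lemma Hverts_image: "X \<in> Hverts d qo i \<Longrightarrow> f X \<in> Hverts d qn i"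
  using f_into clvl_le_clvl_image[of X] by (auto simp: Hverts_iff)

lemma hedge_image:
  assumes "hedge d qo (clus d qo i) i C1 C2"
  shows "f C1 = f C2 \<or> hedge d qn (clus d qn i) i (f C1) (f C2)"
proof -
  have C: "C1 \<in> clus d qo i" "C2 \<in> clus d qo i" "i \<le> clvl d qo C1" "i \<le> clvl d qo C2"
    and close: "cdist d (clus d qo i) C1 C2 < 2 ^ Suc i"
    using assms unfolding hedge_def by simp_all
  have "cdist d (clus d qn i) (f C1) (f C2) \<le> cdist d (clus d qo i) C1 C2"
    using dist_nonneg f_into clus_nonempty_subset_terms C(1,2)
    by (intro cdist_map_le[where S = "terms qn"]) blast+
  with close have "cdist d (clus d qn i) (f C1) (f C2) < 2 ^ Suc i" by linarith
  moreover have "i \<le> clvl d qn (f C1)" "i \<le> clvl d qn (f C2)"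
    using clvl_le_clvl_image C by (meson order_trans)+
  ultimately show ?thesis using f_into C(1,2) unfolding hedge_def by blast
qed

lemma rtranclp_hedge_image:
  "(hedge d qo (clus d qo i) i)\<^sup>*\<^sup>* C D \<Longrightarrow> (hedge d qn (clus d qn i) i)\<^sup>*\<^sup>* (f C) (f D)"
proof (induction rule: rtranclp_induct)
  case (step y z)
  from hedge_image[OF step(2)] show ?case
  proof
    assume "hedge d qn (clus d qn i) i (f y) (f z)"
    with step.IH show ?thesis by (rule rtranclp.rtrancl_into_rtrancl)
  qed (use step.IH in simp)
qed simp

end

lemma clus_refines: "refines (clus d qo i) (clus d qn i)"
proof (induction i)
  case 0
  then show ?case using terms_subset by (auto simp: refines_def)
next
  case (Suc i)
  then obtain f where f: "\<forall>X\<in>clus d qo i. f X \<in> clus d qn i \<and> X \<subseteq> f X"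
    by (rule refines_choice)
  show ?case unfolding refines_def
  proof
    fix C assume "C \<in> clus d qo (Suc i)"
    then show "\<exists>E\<in>clus d qn (Suc i). C \<subseteq> E"
    proof (cases rule: clus_SucE)
      case 1
      then have "C \<subseteq> f C" "f C \<in> clus d qn i" using f by simp_all
      then show ?thesis using refines_clus_Suc[of d qn i] unfolding refines_def by (meson order_trans)
    next
      case (2 C0)
      let ?E = "\<Union>{D. (hedge d qn (clus d qn i) i)\<^sup>*\<^sup>* (f C0) D}"
      have "C0 \<in> Hverts d qo i" using 2 by (simp add: Hverts_iff)
      then have "?E \<in> clus d qn (Suc i)" by (intro clus_Suc_component Hverts_image[OF f])
      moreover have "C \<subseteq> ?E"
      proof
        fix x assume "x \<in> C"
        then obtain D where D: "(hedge d qo (clus d qo i) i)\<^sup>*\<^sup>* C0 D" "x \<in> D"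
          unfolding 2(3) by (elim UnionE CollectE)
        have "D \<in> clus d qo i" using rtranclp_hedge_target[OF D(1)] 2(1) by blast
        then have "x \<in> f D" using f D(2) by blast
        moreover have "(hedge d qn (clus d qn i) i)\<^sup>*\<^sup>* (f C0) (f D)"
          by (rule rtranclp_hedge_image[OF f D(1)])
        ultimately show "x \<in> ?E" by (intro UnionI[of "f D"] CollectI)
      qed
      ultimately show ?thesis by (rule bexI[rotated])
    qed
  qed
qed

end

lemma refines_clus_cinh: "refines (clus d (take t ps) i) (cinh d ps t i Fi)"
  unfolding refines_def
proof
  fix D assume D: "D \<in> clus d (take t ps) i"
  show "\<exists>E\<in>cinh d ps t i Fi. D \<subseteq> E"
  proof (cases "i \<le> clvl d (take t ps) D")
    case True
    let ?E = "\<Union>{D' \<in> Hverts d (take t ps) i. econn Fi D D'}"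
    have HD: "D \<in> Hverts d (take t ps) i" using D True by (simp add: Hverts_iff)
    then have "?E \<in> cinh d ps t i Fi" unfolding cinh_def by (intro UnI2 imageI)
    moreover have "D \<subseteq> ?E" using HD by (auto simp: econn_def)
    ultimately show ?thesis by (rule bexI[rotated])
  next
    case False
    then have "D \<in> cinh d ps t i Fi" using D by (simp add: cinh_def)
    then show ?thesis by blast
  qed
qed

context
  fixes d :: "'a \<Rightarrow> 'a \<Rightarrow> real" and ps :: "('a \<times> 'a) list" and t i :: nat
    and qo :: "('a \<times> 'a) list" and f :: "'a set \<Rightarrow> 'a set" and Fo Fi :: "'a set set set"
  assumes f_into: "\<forall>X\<in>clus d qo i. f X \<in> clus d (take t ps) i \<and> X \<subseteq> f X"
    and f_Hverts: "\<forall>X\<in>Hverts d qo i. f X \<in> Hverts d (take t ps) i"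
    and Fo: "spanning_forest (Hverts d qo i) (Hedges d qo i) Fo"
    and Fi: "spanning_forest (Hverts d (take t ps) i) (inh d ps t i Fo) Fi"
begin

lemma econn_forest_image: "econn Fo C D \<Longrightarrow> econn Fi (f C) (f D)"
  unfolding econn_def
proof (induction rule: rtranclp_induct)
  case (step y z)
  have "{y, z} \<in> Hedges d qo i" "{z, y} \<in> Hedges d qo i"
    using step(2) Fo by (auto simp: spanning_forest_def insert_commute)
  then have y: "y \<in> Hverts d qo i" and z: "z \<in> Hverts d qo i" by (simp_all add: Hedges_endpoint)
  have "econn Fi (f y) (f z)"
  proof (cases "f y = f z")
    case False
    have "{f y, f z} \<in> inh d ps t i Fo"
      unfolding inh_def mem_Collect_eq using step(2) f_into y z False
      by (intro exI[of _ y] exI[of _ z] exI[of _ "f y"] exI[of _ "f z"] conjI refl)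
        (simp_all add: Hverts_iff)
    then have "econn (inh d ps t i Fo) (f y) (f z)" unfolding econn_def by (rule r_into_rtranclp)
    then show ?thesis using spanning_forest_econn[OF Fi] f_Hverts y z by blast
  qed (simp add: econn_def)
  with step.IH show ?case unfolding econn_def by (rule rtranclp_trans)
qed simp

lemma clus_Suc_refines_cinh: "refines (clus d qo (Suc i)) (cinh d ps t i Fi)"
  unfolding refines_def
proof
  fix C assume "C \<in> clus d qo (Suc i)"
  then show "\<exists>E\<in>cinh d ps t i Fi. C \<subseteq> E"
  proof (cases rule: clus_SucE)
    case 1
    then have "C \<subseteq> f C" "f C \<in> clus d (take t ps) i" using f_into by simp_all
    then show ?thesis using refines_clus_cinh unfolding refines_def by (meson order_trans)
  next
    case (2 C0)
    let ?E = "\<Union>{D \<in> Hverts d (take t ps) i. econn Fi (f C0) D}"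
    have C0: "C0 \<in> Hverts d qo i" using 2 by (simp add: Hverts_iff)
    then have "?E \<in> cinh d ps t i Fi" unfolding cinh_def using f_Hverts by (intro UnI2 imageI) simp
    moreover have "C \<subseteq> ?E"
    proof
      fix x assume "x \<in> C"
      then obtain D where D: "(hedge d qo (clus d qo i) i)\<^sup>*\<^sup>* C0 D" "x \<in> D"
        unfolding 2(3) by (elim UnionE CollectE)
      have HD: "D \<in> Hverts d qo i"
        using rtranclp_hedge_target[OF D(1)] C0 by (auto simp: Hverts_iff)
      have "econn Fo C0 D" by (rule spanning_forest_econn[OF Fo C0 HD rtranclp_hedge_econn[OF D(1)]])
      then have "econn Fi (f C0) (f D)" by (rule econn_forest_image)
      moreover have "f D \<in> Hverts d (take t ps) i" "x \<in> f D"
        using f_Hverts f_into HD D(2) by (auto simp: Hverts_iff)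
      ultimately show "x \<in> ?E" by (intro UnionI[of "f D"] CollectI conjI)
    qed
    ultimately show ?thesis by (rule bexI[rotated])
  qed
qed

end

theorem lemma4p4:
  fixes d :: "'a \<Rightarrow> 'a \<Rightarrow> real" and ps :: "('a \<times> 'a) list"
    and F Finh :: "nat \<Rightarrow> nat \<Rightarrow> 'a set set set" and t i :: nat
  assumes distinct_terms: "distinct (concat (map (\<lambda>(u, v). [u, v]) ps))"
    and d_zero: "\<forall>x\<in>terms ps. d x x = 0"
    and d_sym: "\<forall>x\<in>terms ps. \<forall>y\<in>terms ps. d x y = d y x"
    and d_tri: "\<forall>x\<in>terms ps. \<forall>y\<in>terms ps. \<forall>z\<in>terms ps. d x z \<le> d x y + d y z"
    and d_ge1: "\<forall>x\<in>terms ps. \<forall>y\<in>terms ps. x \<noteq> y \<longrightarrow> 1 \<le> d x y"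
    and F0: "\<forall>j. F 0 j = {}"
    and Finh_sf: "\<forall>s\<in>{1..length ps}. \<forall>j.
       spanning_forest (Hverts d (take s ps) j) (inh d ps s j (F (s - 1) j)) (Finh s j)"
    and F_sf: "\<forall>s\<in>{1..length ps}. \<forall>j.
       spanning_forest (Hverts d (take s ps) j) (Hedges d (take s ps) j) (F s j)
       \<and> Finh s j \<subseteq> F s j"
    and t: "1 \<le> t" "t \<le> length ps"
  shows "refines (clus d (take (t - 1) ps) (Suc i)) (cinh d ps t i (Finh t i))"
proof (cases "t = 1")
  case True
  then show ?thesis by (simp add: clus_Nil refines_def)
next
  case False
  let ?qo = "take (t - 1) ps" and ?qn = "take t ps"
  have terms_subset: "terms ?qo \<subseteq> terms ?qn" by (intro terms_mono set_take_subset_set_take) simp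
  have lvl_eq: "\<forall>v\<in>terms ?qo. lvl d ?qo v = lvl d ?qn v"
    using lvl_take_eq[OF distinct_terms, of "t - 1" t] by simp
  have "terms ?qn \<subseteq> terms ps" by (intro terms_mono set_take_subset)
  then have nonneg: "\<forall>x\<in>terms ?qn. \<forall>y\<in>terms ?qn. 0 \<le> d x y"
    using d_zero d_ge1 by (metis order.trans subsetD zero_le_one order_refl)
  obtain f where f: "\<forall>X\<in>clus d ?qo i. f X \<in> clus d ?qn i \<and> X \<subseteq> f X"
    using clus_refines[OF terms_subset lvl_eq nonneg] by (rule refines_choice)
  then have f_Hverts: "\<forall>X\<in>Hverts d ?qo i. f X \<in> Hverts d ?qn i"
    using Hverts_image[OF terms_subset lvl_eq nonneg] by blast
  have "t - 1 \<in> {1..length ps}" "t \<in> {1..length ps}" using t False by auto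
  then have "spanning_forest (Hverts d ?qo i) (Hedges d ?qo i) (F (t - 1) i)"
    and "spanning_forest (Hverts d ?qn i) (inh d ps t i (F (t - 1) i)) (Finh t i)"
    using F_sf Finh_sf by blast+
  then show ?thesis by (rule clus_Suc_refines_cinh[OF f f_Hverts])
qed

end
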